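(* Let $K:\ell^2\to\mathcal{H}$ be a bounded, linear and injective operator into a real Hilbert space $\mathcal{H}$, $f\in\mathcal{H}$, $w=(w_k)$ with $w_k\ge w_0>0$, $\gamma>0$, and let $\bar u$ be the unique minimizer of $\Psi(u)=\frac12\|Ku-f\|_{\mathcal{H}}^2+\sum_k w_k|u_k|$ over $\ell^2$. For $u\in\ell^2$ let $\mathcal{A}(u)=\{k: |u-\gamma K^*(Ku-f)|_k>\gamma w_k\}$ and $\mathcal{G}(u)=(I-P_{\mathcal{A}(u)})+\gamma P_{\mathcal{A}(u)}K^*K$. Let $k_0\in\mathbb{N}$ and $\rho>0$ be such that $\|u-\bar u\|<\rho$ implies $\mathcal{A}(u)\subset\{1,\dots,k_0\}$. Then $\mathcal{G}(u)^{-1}$ is uniformly bounded on the ball $B_\rho(\bar u)=\{u\in\ell^2:\|u-\bar u\|<\rho\}$, i.e. $\sup_{u\in B_\rho(\bar u)}\|\mathcal{G}(u)^{-1}\|<\infty$.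
   Context: $K^*$ is the Hilbert space adjoint of $K$; $|x|_k$ means $|x_k|$; $P_{\mathcal{B}}$ is the coordinate projection onto the indices in $\mathcal{B}\subset\mathbb{N}$. Each $\mathcal{G}(u)$ is invertible on $\ell^2$. *)

theory Defs
  imports "HOL-Analysis.Analysis"
begin

definition l2 :: "(nat \<Rightarrow> real) set" where
  "l2 = {u. summable (\<lambda>k. (u k)\<^sup>2)}"

definition l2norm :: "(nat \<Rightarrow> real) \<Rightarrow> real" where
  "l2norm u = sqrt (\<Sum>k. (u k)\<^sup>2)"

definition unitvec :: "nat \<Rightarrow> nat \<Rightarrow> real" where
  "unitvec k = (\<lambda>j. if j = k then 1 else 0)"

definition bounded_linear_l2 :: "((nat \<Rightarrow> real) \<Rightarrow> 'h::real_normed_vector) \<Rightarrow> bool" where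
  "bounded_linear_l2 K \<longleftrightarrow>
     (\<forall>u\<in>l2. \<forall>v\<in>l2. K (\<lambda>k. u k + v k) = K u + K v) \<and>
     (\<forall>u\<in>l2. \<forall>c. K (\<lambda>k. c * u k) = c *\<^sub>R K u) \<and>
     (\<exists>C. \<forall>u\<in>l2. norm (K u) \<le> C * l2norm u)"

text \<open>Hilbert space adjoint: the k-th coordinate of K* h is the inner product of K e_k with h.\<close>
definition Kadj :: "((nat \<Rightarrow> real) \<Rightarrow> 'h::real_inner) \<Rightarrow> 'h \<Rightarrow> nat \<Rightarrow> real" where
  "Kadj K h = (\<lambda>k. inner (K (unitvec k)) h)"

definition Psi :: "((nat \<Rightarrow> real) \<Rightarrow> 'h::real_inner) \<Rightarrow> 'h \<Rightarrow> (nat \<Rightarrow> real)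
                   \<Rightarrow> (nat \<Rightarrow> real) \<Rightarrow> ereal" where
  "Psi K f w u = ereal ((norm (K u - f))\<^sup>2 / 2) + (\<Sum>k. ereal (w k * \<bar>u k\<bar>))"

definition activeset :: "((nat \<Rightarrow> real) \<Rightarrow> 'h::real_inner) \<Rightarrow> 'h \<Rightarrow> (nat \<Rightarrow> real) \<Rightarrow> real
                         \<Rightarrow> (nat \<Rightarrow> real) \<Rightarrow> nat set" where
  "activeset K f w \<gamma> u = {k. \<bar>u k - \<gamma> * Kadj K (K u - f) k\<bar> > \<gamma> * w k}"

definition Gop :: "((nat \<Rightarrow> real) \<Rightarrow> 'h::real_inner) \<Rightarrow> 'h \<Rightarrow> (nat \<Rightarrow> real) \<Rightarrow> real
                   \<Rightarrow> (nat \<Rightarrow> real) \<Rightarrow> (nat \<Rightarrow> real) \<Rightarrow> (nat \<Rightarrow> real)" where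
  "Gop K f w \<gamma> u v = (\<lambda>k. if k \<in> activeset K f w \<gamma> u then \<gamma> * Kadj K (K v) k else v k)"

end

theory Submission
  imports Defs
begin

text \<open>On the ball, \<open>\<G>(u)\<close> only depends on the active set \<open>\<A>(u)\<close>, which ranges over the finitely
  many subsets of \<open>{..<k0}\<close>; so it suffices to invert \<open>\<G>\<^sub>A\<close> for each finite \<open>A\<close> with a bounded inverse.
  The equation \<open>\<G>\<^sub>A v = y\<close> forces \<open>v = y\<close> off \<open>A\<close> and reduces on \<open>A\<close> to a linear system whose matrix is
  the Gram matrix of the vectors \<open>K e\<^sub>j\<close>, \<open>j \<in> A\<close>; these are linearly independent because \<open>K\<close> is
  injective, so the system is uniquely solvable with coefficients bounded by the data.\<close>

lemma zero_in_l2: "(\<lambda>_. 0) \<in> l2"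
  by (simp add: l2_def)

lemma l2_finite_modification:
  assumes "u \<in> l2" "finite A" "\<And>k. k \<notin> A \<Longrightarrow> v k = u k"
  shows "v \<in> l2"
proof -
  have "summable (\<lambda>k. (v k)\<^sup>2 - (u k)\<^sup>2)"
    by (rule summable_finite[OF assms(2)]) (simp add: assms(3))
  from summable_add[OF this, of "\<lambda>k. (u k)\<^sup>2"] assms(1)
  show ?thesis by (simp add: l2_def)
qed

lemma l2_finite_support:
  assumes "finite A" "\<And>k. k \<notin> A \<Longrightarrow> v k = 0"
  shows "v \<in> l2"
  using l2_finite_modification[OF zero_in_l2 assms] .

lemma unitvec_in_l2: "unitvec j \<in> l2"
  by (rule l2_finite_support[of "{j}"]) (auto simp: unitvec_def)

lemma l2norm_nonneg: "u \<in> l2 \<Longrightarrow> 0 \<le> l2norm u"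
  by (auto simp: l2norm_def l2_def intro!: suminf_nonneg)

lemma abs_coord_le_l2norm:
  assumes "y \<in> l2"
  shows "\<bar>y k\<bar> \<le> l2norm y"
proof -
  have "(\<Sum>n\<in>{k}. (y n)\<^sup>2) \<le> (\<Sum>n. (y n)\<^sup>2)"
    using assms by (intro sum_le_suminf) (auto simp: l2_def)
  then show ?thesis
    unfolding l2norm_def by (intro real_le_rsqrt) (simp add: power2_abs)
qed

lemma suminf_square_override_le:
  assumes "y \<in> l2" "finite A"
  shows "(\<Sum>k. (if k \<in> A then c k else y k)\<^sup>2) \<le> (\<Sum>k. (y k)\<^sup>2) + (\<Sum>k\<in>A. (c k)\<^sup>2)"
proof -
  have sy: "summable (\<lambda>k. (y k)\<^sup>2)"
    using assms(1) by (simp add: l2_def)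
  have sc: "summable (\<lambda>k. if k \<in> A then (c k)\<^sup>2 else 0)"
    by (rule summable_finite[OF assms(2)]) simp
  have "(\<lambda>k. if k \<in> A then c k else y k) \<in> l2"
    by (rule l2_finite_modification[OF assms]) simp
  then have "(\<Sum>k. (if k \<in> A then c k else y k)\<^sup>2) \<le> (\<Sum>k. (y k)\<^sup>2 + (if k \<in> A then (c k)\<^sup>2 else 0))"
    using summable_add[OF sy sc] by (intro suminf_le) (auto simp: l2_def)
  also have "\<dots> = (\<Sum>k. (y k)\<^sup>2) + (\<Sum>k\<in>A. (c k)\<^sup>2)"
    using suminf_finite[OF assms(2), of "\<lambda>k. if k \<in> A then (c k)\<^sup>2 else 0"]
    by (simp add: suminf_add[OF sy sc, symmetric])
  finally show ?thesis .
qed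

lemma l2norm_override_le:
  fixes N :: real
  assumes "y \<in> l2" "finite A" "\<And>j. j \<in> A \<Longrightarrow> \<bar>c j\<bar> \<le> N"
  shows "l2norm (\<lambda>k. if k \<in> A then c k else y k) \<le> sqrt ((l2norm y)\<^sup>2 + card A * N\<^sup>2)"
proof -
  have "(c j)\<^sup>2 \<le> N\<^sup>2" if "j \<in> A" for j
  proof -
    have "\<bar>c j\<bar> \<le> \<bar>N\<bar>"
      using assms(3)[OF that] by linarith
    then show ?thesis by (simp add: abs_le_square_iff)
  qed
  then have "(\<Sum>j\<in>A. (c j)\<^sup>2) \<le> card A * N\<^sup>2"
    using sum_mono[of A "\<lambda>j. (c j)\<^sup>2" "\<lambda>_. N\<^sup>2"] by simp
  moreover have "(\<Sum>k. (y k)\<^sup>2) = (l2norm y)\<^sup>2"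
    using assms(1) unfolding l2norm_def l2_def by (simp add: suminf_nonneg)
  ultimately show ?thesis
    using suminf_square_override_le[OF assms(1,2), of c] unfolding l2norm_def
    by (intro real_sqrt_le_mono) linarith
qed

context
  fixes K :: "(nat \<Rightarrow> real) \<Rightarrow> 'h::real_normed_vector"
  assumes K_bl: "bounded_linear_l2 K"
begin

lemma K_add: "u \<in> l2 \<Longrightarrow> v \<in> l2 \<Longrightarrow> K (\<lambda>k. u k + v k) = K u + K v"
  using K_bl by (simp add: bounded_linear_l2_def)

lemma K_scale: "u \<in> l2 \<Longrightarrow> K (\<lambda>k. c * u k) = c *\<^sub>R K u"
  using K_bl by (simp add: bounded_linear_l2_def)

lemma K_zero: "K (\<lambda>_. 0) = 0"
  using K_scale[OF zero_in_l2, of 0] by simp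

lemma K_bound_nonneg: "\<exists>C\<ge>0. \<forall>u\<in>l2. norm (K u) \<le> C * l2norm u"
proof -
  obtain C where C: "\<forall>u\<in>l2. norm (K u) \<le> C * l2norm u"
    using K_bl unfolding bounded_linear_l2_def by blast
  have "norm (K u) \<le> \<bar>C\<bar> * l2norm u" if "u \<in> l2" for u
  proof -
    have "C * l2norm u \<le> \<bar>C\<bar> * l2norm u"
      using l2norm_nonneg[OF that] by (intro mult_right_mono) auto
    then show ?thesis using C that by fastforce
  qed
  then show ?thesis by (intro exI[of _ "\<bar>C\<bar>"]) auto
qed

lemma K_finite_support:
  assumes "finite A" "\<And>k. k \<notin> A \<Longrightarrow> z k = 0"
  shows "K z = (\<Sum>j\<in>A. z j *\<^sub>R K (unitvec j))"
  using assms
proof (induction A arbitrary: z rule: finite_induct)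
  case empty
  then have "z = (\<lambda>_. 0)" by auto
  then show ?case by (simp add: K_zero)
next
  case (insert a A)
  define z' where "z' = z(a := 0)"
  have z'A: "z' k = 0" if "k \<notin> A" for k
    using insert.prems that by (auto simp: z'_def)
  have z'_l2: "z' \<in> l2"
    using z'A insert.hyps by (intro l2_finite_support[of A]) auto
  have za_l2: "(\<lambda>k. z a * unitvec a k) \<in> l2"
    by (rule l2_finite_support[of "{a}"]) (auto simp: unitvec_def)
  have "z = (\<lambda>k. z' k + z a * unitvec a k)"
    by (auto simp: z'_def unitvec_def)
  then have "K z = K z' + z a *\<^sub>R K (unitvec a)"
    using K_add[OF z'_l2 za_l2] K_scale[OF unitvec_in_l2] by simp
  also have "K z' = (\<Sum>j\<in>A. z' j *\<^sub>R K (unitvec j))"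
    using z'A by (rule insert.IH)
  also have "\<dots> = (\<Sum>j\<in>A. z j *\<^sub>R K (unitvec j))"
    using insert.hyps by (intro sum.cong) (auto simp: z'_def)
  finally show ?case
    using insert.hyps by (simp add: add.commute)
qed

end

lemma K_unitvec_independent:
  fixes K :: "(nat \<Rightarrow> real) \<Rightarrow> 'h::real_normed_vector"
  assumes "bounded_linear_l2 K" "inj_on K l2" "finite A"
    and "(\<Sum>j\<in>A. c j *\<^sub>R K (unitvec j)) = 0" "j \<in> A"
  shows "c j = 0"
proof -
  define z where "z = (\<lambda>k. if k \<in> A then c k else 0)"
  have z_l2: "z \<in> l2"
    using assms(3) by (intro l2_finite_support[of A]) (auto simp: z_def)
  have "K z = (\<Sum>j\<in>A. c j *\<^sub>R K (unitvec j))"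
    using K_finite_support[OF assms(1,3), of z] by (auto simp: z_def intro: sum.cong)
  then have "K z = K (\<lambda>_. 0)"
    using assms(4) K_zero[OF assms(1)] by simp
  then have "z = (\<lambda>_. 0)"
    using inj_onD[OF assms(2) _ z_l2 zero_in_l2] by blast
  then show ?thesis
    using assms(5) by (metis z_def)
qed

lemma independent_subset:
  fixes x :: "nat \<Rightarrow> 'h::real_vector"
  assumes "finite B" "A \<subseteq> B"
    and indep: "\<And>c j. (\<Sum>j\<in>B. c j *\<^sub>R x j) = 0 \<Longrightarrow> j \<in> B \<Longrightarrow> c j = 0"
    and "(\<Sum>j\<in>A. c j *\<^sub>R x j) = 0" "j \<in> A"
  shows "c j = 0"
proof -
  let ?c = "\<lambda>j. if j \<in> A then c j else 0"
  have "(\<Sum>j\<in>B. ?c j *\<^sub>R x j) = (\<Sum>j\<in>A. c j *\<^sub>R x j)"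
    using assms(1,2) by (intro sum.mono_neutral_cong_right) auto
  then show ?thesis
    using indep[of ?c j] assms by auto
qed

text \<open>Induction on \<open>A\<close>: adjoining \<open>x\<^sub>a\<close>, its component \<open>q\<close> orthogonal to the others is nonzero, and
  adding a multiple of \<open>q\<close> to a solution for \<open>A\<close> fixes the new equation without disturbing the old ones.\<close>
lemma gram_system_solvable:
  fixes x :: "nat \<Rightarrow> 'h::real_inner"
  assumes "finite A"
    and "\<And>c j. (\<Sum>j\<in>A. c j *\<^sub>R x j) = 0 \<Longrightarrow> j \<in> A \<Longrightarrow> c j = 0"
  shows "\<exists>c. \<forall>i\<in>A. inner (x i) (\<Sum>j\<in>A. c j *\<^sub>R x j) = b i"
  using assms
proof (induction A arbitrary: b rule: finite_induct)
  case empty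
  then show ?case by simp
next
  case (insert a A)
  have indep_A: "c j = 0" if "(\<Sum>j\<in>A. c j *\<^sub>R x j) = 0" "j \<in> A" for c j
  proof (rule independent_subset[of "insert a A" A x])
    show "\<And>c j. (\<Sum>j\<in>insert a A. c j *\<^sub>R x j) = 0 \<Longrightarrow> j \<in> insert a A \<Longrightarrow> c j = 0"
      by (fact insert.prems)
  qed (use insert.hyps that in auto)
  have solvable_A: "\<exists>c. \<forall>k\<in>A. inner (x k) (\<Sum>j\<in>A. c j *\<^sub>R x j) = b' k" for b'
    by (rule insert.IH) (rule indep_A)
  obtain p where p: "\<forall>k\<in>A. inner (x k) (\<Sum>j\<in>A. p j *\<^sub>R x j) = inner (x k) (x a)"
    using solvable_A[of "\<lambda>k. inner (x k) (x a)"] by blast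
  obtain s where s: "\<forall>k\<in>A. inner (x k) (\<Sum>j\<in>A. s j *\<^sub>R x j) = b k"
    using solvable_A[of b] by blast
  define P where "P = (\<Sum>j\<in>A. p j *\<^sub>R x j)"
  define S where "S = (\<Sum>j\<in>A. s j *\<^sub>R x j)"
  define q where "q = x a - P"
  have q_orth: "inner (x k) q = 0" if "k \<in> A" for k
    using p that by (simp add: q_def P_def inner_diff_right)
  have "q \<noteq> 0"
  proof
    assume "q = 0"
    define c where "c = (\<lambda>j. if j = a then 1 else - p j)"
    have "(\<Sum>j\<in>A. c j *\<^sub>R x j) = - P"
      unfolding P_def sum_negf[symmetric] using insert.hyps by (intro sum.cong) (auto simp: c_def)
    then have "(\<Sum>j\<in>insert a A. c j *\<^sub>R x j) = q"
      using insert.hyps by (simp add: c_def q_def)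
    then have "c a = 0"
      using insert.prems \<open>q = 0\<close> by blast
    then show False by (simp add: c_def)
  qed
  have "inner P q = 0"
    unfolding P_def inner_sum_left using q_orth by simp
  then have xa_q: "inner (x a) q = inner q q"
    by (simp add: q_def inner_diff_left)
  define t where "t = (b a - inner (x a) S) / inner q q"
  define c where "c = (\<lambda>j. if j = a then t else s j - t * p j)"
  have "(\<Sum>j\<in>A. c j *\<^sub>R x j) = (\<Sum>j\<in>A. s j *\<^sub>R x j - (t * p j) *\<^sub>R x j)"
    using insert.hyps by (intro sum.cong) (auto simp: c_def scaleR_diff_left)
  also have "\<dots> = S - t *\<^sub>R P"
    by (simp add: S_def P_def sum_subtractf scaleR_sum_right)
  finally have "(\<Sum>j\<in>A. c j *\<^sub>R x j) = S - t *\<^sub>R P" .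
  then have sum_c: "(\<Sum>j\<in>insert a A. c j *\<^sub>R x j) = S + t *\<^sub>R q"
    using insert.hyps by (simp add: c_def q_def algebra_simps)
  have "inner (x k) (\<Sum>j\<in>insert a A. c j *\<^sub>R x j) = b k" if "k \<in> insert a A" for k
  proof (cases "k = a")
    case True
    then show ?thesis
      using \<open>q \<noteq> 0\<close> by (simp add: sum_c inner_add_right xa_q t_def)
  next
    case False
    then show ?thesis
      using that s q_orth by (simp add: sum_c inner_add_right S_def)
  qed
  then show ?case by blast
qed

lemma gram_system_solvable_bounded:
  fixes x :: "nat \<Rightarrow> 'h::real_inner"
  assumes "finite A"
    and "\<And>c j. (\<Sum>j\<in>A. c j *\<^sub>R x j) = 0 \<Longrightarrow> j \<in> A \<Longrightarrow> c j = 0"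
  shows "\<exists>M\<ge>0. \<forall>b. \<exists>c. (\<forall>i\<in>A. inner (x i) (\<Sum>j\<in>A. c j *\<^sub>R x j) = b i) \<and>
                      (\<forall>j\<in>A. \<bar>c j\<bar> \<le> M * (\<Sum>k\<in>A. \<bar>b k\<bar>))"
proof -
  define \<delta> :: "nat \<Rightarrow> nat \<Rightarrow> real" where "\<delta> = (\<lambda>k i. if i = k then 1 else 0)"
  have "\<forall>k. \<exists>dk. \<forall>i\<in>A. inner (x i) (\<Sum>j\<in>A. dk j *\<^sub>R x j) = \<delta> k i"
    by (intro allI gram_system_solvable[OF assms(1)]) (rule assms(2))
  then obtain d where d: "\<And>k i. i \<in> A \<Longrightarrow> inner (x i) (\<Sum>j\<in>A. d k j *\<^sub>R x j) = \<delta> k i"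
    by metis
  define M where "M = (\<Sum>k\<in>A. \<Sum>j\<in>A. \<bar>d k j\<bar>)"
  have d_le_M: "\<bar>d k j\<bar> \<le> M" if "k \<in> A" "j \<in> A" for k j
  proof -
    have "\<bar>d k j\<bar> \<le> (\<Sum>j\<in>A. \<bar>d k j\<bar>)"
      using assms(1) that by (intro member_le_sum) auto
    also have "\<dots> \<le> M"
      unfolding M_def using assms(1) that by (intro member_le_sum) (auto intro: sum_nonneg)
    finally show ?thesis .
  qed
  have "\<exists>c. (\<forall>i\<in>A. inner (x i) (\<Sum>j\<in>A. c j *\<^sub>R x j) = b i) \<and>
            (\<forall>j\<in>A. \<bar>c j\<bar> \<le> M * (\<Sum>k\<in>A. \<bar>b k\<bar>))" for b
  proof (intro exI conjI ballI)
    define c where "c = (\<lambda>j. \<Sum>k\<in>A. b k * d k j)"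
    fix i assume "i \<in> A"
    have "(\<Sum>j\<in>A. c j *\<^sub>R x j) = (\<Sum>k\<in>A. b k *\<^sub>R (\<Sum>j\<in>A. d k j *\<^sub>R x j))"
      unfolding c_def scaleR_sum_left scaleR_sum_right by (subst sum.swap) simp
    then have "inner (x i) (\<Sum>j\<in>A. c j *\<^sub>R x j) = (\<Sum>k\<in>A. b k * \<delta> k i)"
      using d[OF \<open>i \<in> A\<close>] by (simp add: inner_sum_right)
    also have "\<dots> = b i"
      using \<open>i \<in> A\<close> assms(1) by (simp add: \<delta>_def if_distrib cong: if_cong)
    finally show "inner (x i) (\<Sum>j\<in>A. c j *\<^sub>R x j) = b i" .
  next
    fix j assume "j \<in> A"
    have "\<bar>\<Sum>k\<in>A. b k * d k j\<bar> \<le> (\<Sum>k\<in>A. \<bar>b k\<bar> * M)"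
      using d_le_M[OF _ \<open>j \<in> A\<close>]
      by (intro order.trans[OF sum_abs] sum_mono) (simp add: abs_mult mult_left_mono)
    then show "\<bar>\<Sum>k\<in>A. b k * d k j\<bar> \<le> M * (\<Sum>k\<in>A. \<bar>b k\<bar>)"
      by (simp add: sum_distrib_left mult.commute)
  qed
  moreover have "M \<ge> 0"
    unfolding M_def by (intro sum_nonneg) auto
  ultimately show ?thesis by blast
qed

definition Gset :: "((nat \<Rightarrow> real) \<Rightarrow> 'h::real_inner) \<Rightarrow> real \<Rightarrow> nat set
                   \<Rightarrow> (nat \<Rightarrow> real) \<Rightarrow> nat \<Rightarrow> real" where
  "Gset K \<gamma> A v = (\<lambda>k. if k \<in> A then \<gamma> * Kadj K (K v) k else v k)"

lemma Gop_eq_Gset: "Gop K f w \<gamma> u = Gset K \<gamma> (activeset K f w \<gamma> u)"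
  by (simp add: Gop_def Gset_def fun_eq_iff)

context
  fixes K :: "(nat \<Rightarrow> real) \<Rightarrow> 'h::real_inner" and \<gamma> :: real and A :: "nat set"
  assumes K_bl: "bounded_linear_l2 K" and K_inj: "inj_on K l2"
    and finite_A: "finite A" and gamma_pos: "\<gamma> > 0"
begin

lemma Gset_in_l2: "v \<in> l2 \<Longrightarrow> Gset K \<gamma> A v \<in> l2"
  by (rule l2_finite_modification[OF _ finite_A]) (simp_all add: Gset_def)

lemma inj_on_Gset: "inj_on (Gset K \<gamma> A) l2"
proof (rule inj_onI)
  fix v1 v2 assume v1: "v1 \<in> l2" and v2: "v2 \<in> l2" and eq: "Gset K \<gamma> A v1 = Gset K \<gamma> A v2"
  define d where "d = (\<lambda>k. v1 k - v2 k)"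
  have d_outside: "d k = 0" if "k \<notin> A" for k
    using fun_cong[OF eq, of k] that by (simp add: Gset_def d_def)
  have d_l2: "d \<in> l2"
    using finite_A d_outside by (rule l2_finite_support)
  have "v1 = (\<lambda>k. v2 k + d k)"
    by (simp add: d_def)
  then have K_v1: "K v1 = K v2 + K d"
    using K_add[OF K_bl v2 d_l2] by simp
  have d_orth: "inner (K (unitvec k)) (K d) = 0" if "k \<in> A" for k
    using fun_cong[OF eq, of k] that gamma_pos by (simp add: Gset_def Kadj_def K_v1 inner_add_right)
  have K_d: "K d = (\<Sum>j\<in>A. d j *\<^sub>R K (unitvec j))"
    by (rule K_finite_support[OF K_bl finite_A d_outside])
  have "inner (K d) (K d) = inner (\<Sum>j\<in>A. d j *\<^sub>R K (unitvec j)) (K d)"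
    by (simp only: K_d[symmetric])
  also have "\<dots> = (\<Sum>j\<in>A. d j * inner (K (unitvec j)) (K d))"
    by (simp add: inner_sum_left)
  also have "\<dots> = 0"
    using d_orth by simp
  finally have "K d = K (\<lambda>_. 0)"
    using K_zero[OF K_bl] by simp
  then have "d = (\<lambda>_. 0)"
    by (rule inj_onD[OF K_inj _ d_l2 zero_in_l2])
  then show "v1 = v2"
    by (simp add: d_def fun_eq_iff)
qed

lemma Gset_override_eq:
  assumes y_l2: "y \<in> l2"
    and c: "\<And>i. i \<in> A \<Longrightarrow> inner (K (unitvec i)) (\<Sum>j\<in>A. c j *\<^sub>R K (unitvec j))
              = y i / \<gamma> - inner (K (unitvec i)) (K (\<lambda>k. if k \<in> A then 0 else y k))"
  shows "Gset K \<gamma> A (\<lambda>k. if k \<in> A then c k else y k) = y"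
proof -
  define y_out where "y_out = (\<lambda>k. if k \<in> A then 0 else y k)"
  define z where "z = (\<lambda>k. if k \<in> A then c k else 0)"
  have y_out_l2: "y_out \<in> l2"
    by (rule l2_finite_modification[OF y_l2 finite_A]) (simp add: y_out_def)
  have z_l2: "z \<in> l2"
    by (rule l2_finite_support[OF finite_A]) (simp add: z_def)
  have "K z = (\<Sum>j\<in>A. c j *\<^sub>R K (unitvec j))"
    using K_finite_support[OF K_bl finite_A, of z] by (simp add: z_def cong: sum.cong)
  moreover have "(\<lambda>k. if k \<in> A then c k else y k) = (\<lambda>k. y_out k + z k)"
    by (simp add: y_out_def z_def fun_eq_iff)
  ultimately have "K (\<lambda>k. if k \<in> A then c k else y k) = K y_out + (\<Sum>j\<in>A. c j *\<^sub>R K (unitvec j))"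
    using K_add[OF K_bl y_out_l2 z_l2] by simp
  then show ?thesis
    using c gamma_pos by (simp add: Gset_def Kadj_def fun_eq_iff inner_add_right y_out_def)
qed

lemma Gram_rhs_bound:
  assumes y_l2: "y \<in> l2" and "CK \<ge> 0" and CK: "\<And>u. u \<in> l2 \<Longrightarrow> norm (K u) \<le> CK * l2norm u"
  shows "\<bar>y k / \<gamma> - inner (K (unitvec k)) (K (\<lambda>i. if i \<in> A then 0 else y i))\<bar>
           \<le> (1 / \<gamma> + norm (K (unitvec k)) * CK) * l2norm y"
proof -
  define y_out where "y_out = (\<lambda>i. if i \<in> A then 0 else y i)"
  have y_out_l2: "y_out \<in> l2"
    by (rule l2_finite_modification[OF y_l2 finite_A]) (simp add: y_out_def)
  have "l2norm y_out \<le> l2norm y"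
    using l2norm_override_le[OF y_l2 finite_A, of "\<lambda>_. 0" 0] l2norm_nonneg[OF y_l2]
    by (simp add: y_out_def)
  then have "norm (K y_out) \<le> CK * l2norm y"
    using CK[OF y_out_l2] mult_left_mono[OF _ \<open>CK \<ge> 0\<close>] by (meson order_trans)
  then have "\<bar>inner (K (unitvec k)) (K y_out)\<bar> \<le> norm (K (unitvec k)) * (CK * l2norm y)"
    by (meson Cauchy_Schwarz_ineq2 mult_left_mono norm_ge_zero order_trans)
  moreover have "\<bar>y k / \<gamma>\<bar> \<le> 1 / \<gamma> * l2norm y"
    using abs_coord_le_l2norm[OF y_l2, of k] gamma_pos by (simp add: divide_right_mono)
  ultimately show ?thesis
    unfolding y_out_def[symmetric] distrib_right mult.assoc
    by (meson abs_triangle_ineq4 add_mono order_trans)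
qed

lemma Gset_surj_bounded: "\<exists>C. \<forall>y\<in>l2. \<exists>v\<in>l2. Gset K \<gamma> A v = y \<and> l2norm v \<le> C * l2norm y"
proof -
  define x where "x = (\<lambda>j. K (unitvec j))"
  have "\<exists>M\<ge>0. \<forall>b. \<exists>c. (\<forall>i\<in>A. inner (x i) (\<Sum>j\<in>A. c j *\<^sub>R x j) = b i) \<and>
                           (\<forall>j\<in>A. \<bar>c j\<bar> \<le> M * (\<Sum>k\<in>A. \<bar>b k\<bar>))"
    unfolding x_def
    by (rule gram_system_solvable_bounded[OF finite_A]) (rule K_unitvec_independent[OF K_bl K_inj finite_A])
  then obtain M where "M \<ge> 0" and M: "\<And>b. \<exists>c. (\<forall>i\<in>A. inner (x i) (\<Sum>j\<in>A. c j *\<^sub>R x j) = b i) \<and>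
                                         (\<forall>j\<in>A. \<bar>c j\<bar> \<le> M * (\<Sum>k\<in>A. \<bar>b k\<bar>))"
    by blast
  obtain CK where "CK \<ge> 0" and CK: "\<And>u. u \<in> l2 \<Longrightarrow> norm (K u) \<le> CK * l2norm u"
    using K_bound_nonneg[OF K_bl] by blast
  define B where "B = (\<Sum>k\<in>A. 1 / \<gamma> + norm (x k) * CK)"
  have "\<exists>v\<in>l2. Gset K \<gamma> A v = y \<and> l2norm v \<le> sqrt (1 + card A * (M * B)\<^sup>2) * l2norm y"
    if y_l2: "y \<in> l2" for y
  proof -
    define y_out where "y_out = (\<lambda>k. if k \<in> A then 0 else y k)"
    define b where "b = (\<lambda>k. y k / \<gamma> - inner (x k) (K y_out))"
    have y_out_l2: "y_out \<in> l2"
      by (rule l2_finite_modification[OF y_l2 finite_A]) (simp add: y_out_def)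
    have "\<bar>b k\<bar> \<le> (1 / \<gamma> + norm (x k) * CK) * l2norm y" for k
      unfolding b_def x_def y_out_def using y_l2 \<open>CK \<ge> 0\<close> CK by (rule Gram_rhs_bound)
    then have sum_b: "(\<Sum>k\<in>A. \<bar>b k\<bar>) \<le> B * l2norm y"
      unfolding B_def sum_distrib_right by (intro sum_mono)
    obtain c where c_sol: "\<forall>i\<in>A. inner (x i) (\<Sum>j\<in>A. c j *\<^sub>R x j) = b i"
      and c_bound: "\<forall>j\<in>A. \<bar>c j\<bar> \<le> M * (\<Sum>k\<in>A. \<bar>b k\<bar>)"
      using M by blast
    define v where "v = (\<lambda>k. if k \<in> A then c k else y k)"
    have "Gset K \<gamma> A v = y"
      unfolding v_def using c_sol by (intro Gset_override_eq[OF y_l2]) (simp add: x_def b_def y_out_def)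
    moreover have "v \<in> l2"
      by (rule l2_finite_modification[OF y_l2 finite_A]) (simp add: v_def)
    moreover have "l2norm v \<le> sqrt ((l2norm y)\<^sup>2 + card A * (M * B * l2norm y)\<^sup>2)"
      unfolding v_def using c_bound mult_left_mono[OF sum_b \<open>M \<ge> 0\<close>]
      by (intro l2norm_override_le[OF y_l2 finite_A]) (auto simp: mult.assoc)
    moreover have "\<dots> = sqrt ((1 + card A * (M * B)\<^sup>2) * (l2norm y)\<^sup>2)"
      by (simp add: power_mult_distrib algebra_simps)
    moreover have "\<dots> = sqrt (1 + card A * (M * B)\<^sup>2) * l2norm y"
      using l2norm_nonneg[OF y_l2] by (simp add: real_sqrt_mult)
    ultimately show ?thesis by auto
  qed
  then show ?thesis by blast
qed

lemma Gset_invertible: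
  "\<exists>C. bij_betw (Gset K \<gamma> A) l2 l2 \<and> (\<forall>y\<in>l2. l2norm (inv_into l2 (Gset K \<gamma> A) y) \<le> C * l2norm y)"
proof -
  obtain C where C: "\<And>y. y \<in> l2 \<Longrightarrow> \<exists>v\<in>l2. Gset K \<gamma> A v = y \<and> l2norm v \<le> C * l2norm y"
    using Gset_surj_bounded by blast
  have "Gset K \<gamma> A ` l2 = l2"
    using Gset_in_l2 C by blast
  then have "bij_betw (Gset K \<gamma> A) l2 l2"
    using inj_on_Gset by (simp add: bij_betw_def)
  moreover have "l2norm (inv_into l2 (Gset K \<gamma> A) y) \<le> C * l2norm y" if "y \<in> l2" for y
    using C[OF that] inv_into_f_f[OF inj_on_Gset] by metis
  ultimately show ?thesis by blast
qed

end

lemma Gset_uniformly_invertible: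
  fixes K :: "(nat \<Rightarrow> real) \<Rightarrow> 'h::real_inner"
  assumes K_bl: "bounded_linear_l2 K" and K_inj: "inj_on K l2"
    and finite_S: "finite S" and gamma_pos: "\<gamma> > 0"
  shows "\<exists>C. \<forall>A\<subseteq>S. bij_betw (Gset K \<gamma> A) l2 l2 \<and>
                  (\<forall>y\<in>l2. l2norm (inv_into l2 (Gset K \<gamma> A) y) \<le> C * l2norm y)"
proof -
  have "\<forall>A\<in>Pow S. \<exists>C. bij_betw (Gset K \<gamma> A) l2 l2 \<and>
                      (\<forall>y\<in>l2. l2norm (inv_into l2 (Gset K \<gamma> A) y) \<le> C * l2norm y)"
    using Gset_invertible[OF K_bl K_inj _ gamma_pos] finite_subset[OF _ finite_S] by blast
  then obtain CA where CA: "\<And>A. A \<subseteq> S \<Longrightarrow> bij_betw (Gset K \<gamma> A) l2 l2 \<and>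
                      (\<forall>y\<in>l2. l2norm (inv_into l2 (Gset K \<gamma> A) y) \<le> CA A * l2norm y)"
    by (metis PowI)
  define C where "C = (\<Sum>A\<in>Pow S. \<bar>CA A\<bar>)"
  have "CA A * l2norm y \<le> C * l2norm y" if "A \<subseteq> S" "y \<in> l2" for A y
  proof (rule mult_right_mono)
    have "\<bar>CA A\<bar> \<le> C"
      unfolding C_def using finite_S that(1) by (intro member_le_sum) auto
    then show "CA A \<le> C" by linarith
  qed (rule l2norm_nonneg[OF that(2)])
  then show ?thesis
    using CA by (meson order_trans)
qed

theorem corollary3p12:
  fixes K :: "(nat \<Rightarrow> real) \<Rightarrow> 'h::{real_inner, complete_space}"
    and f :: 'h and w :: "nat \<Rightarrow> real" and w0 \<gamma> \<rho> :: real
    and ubar :: "nat \<Rightarrow> real" and k0 :: nat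
  assumes K_bl: "bounded_linear_l2 K"
    and K_inj: "inj_on K l2"
    and w0_pos: "w0 > 0" and w_ge: "\<And>k. w k \<ge> w0"
    and gamma_pos: "\<gamma> > 0"
    and ubar_l2: "ubar \<in> l2"
    and ubar_min: "\<And>u. u \<in> l2 \<Longrightarrow> Psi K f w ubar \<le> Psi K f w u"
    and ubar_unique: "\<And>v. v \<in> l2 \<Longrightarrow> (\<forall>u\<in>l2. Psi K f w v \<le> Psi K f w u) \<Longrightarrow> v = ubar"
    and rho_pos: "\<rho> > 0"
    and active_bound: "\<And>u. u \<in> l2 \<Longrightarrow> l2norm (\<lambda>k. u k - ubar k) < \<rho> \<Longrightarrow>
                          activeset K f w \<gamma> u \<subseteq> {..<k0}"
  shows "\<exists>C. \<forall>u\<in>l2. l2norm (\<lambda>k. u k - ubar k) < \<rho> \<longrightarrow>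
            bij_betw (Gop K f w \<gamma> u) l2 l2 \<and>
            (\<forall>y\<in>l2. l2norm (inv_into l2 (Gop K f w \<gamma> u) y) \<le> C * l2norm y)"
proof -
  obtain C where C: "\<And>A. A \<subseteq> {..<k0} \<Longrightarrow> bij_betw (Gset K \<gamma> A) l2 l2 \<and>
                    (\<forall>y\<in>l2. l2norm (inv_into l2 (Gset K \<gamma> A) y) \<le> C * l2norm y)"
    using Gset_uniformly_invertible[OF K_bl K_inj finite_lessThan gamma_pos] by blast
  show ?thesis
    unfolding Gop_eq_Gset using C[OF active_bound] by blast
qed

end
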